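(* Let $A$ be a metabelian Lie algebra over a field $k$. Then $A$ is a $U$-algebra if and only if every finitely generated subalgebra of $A$ is a $U$-algebra.
   Context: A Lie algebra is metabelian if $(a\circ b)\circ(c\circ d)=0$ identically; $A^2$ is the ideal spanned by all products; $\mathrm{Fit}(A)$ is the ideal generated by all elements lying in nilpotent ideals of $A$. If $\mathrm{Fit}(A)$ is abelian, choose $\{a_\alpha:\alpha\in\Lambda\}\subseteq A$ whose images form a basis of $A/\mathrm{Fit}(A)$ and let $R=k[x_\alpha:\alpha\in\Lambda]$; then $\mathrm{Fit}(A)$ is an $R$-module via $b\cdot x_\alpha=b\circ a_\alpha$, extended multiplicatively and linearly (torsion-freeness does not depend on the choice). $A$ is a (metabelian Lie) $U$-algebra if $\mathrm{Fit}(A)$ is abelian and is a torsion-free $R$-module. *)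

theory Defs
  imports Main "HOL.Vector_Spaces" "HOL-Library.Multiset" "HOL-Library.Poly_Mapping"
begin

definition lie_algebra :: "('k::field \<Rightarrow> 'v::ab_group_add \<Rightarrow> 'v) \<Rightarrow> ('v \<Rightarrow> 'v \<Rightarrow> 'v) \<Rightarrow> bool" where
  "lie_algebra scale br \<longleftrightarrow> vector_space scale
     \<and> (\<forall>x y z. br (x + y) z = br x z + br y z)
     \<and> (\<forall>x y z. br x (y + z) = br x y + br x z)
     \<and> (\<forall>c x y. br (scale c x) y = scale c (br x y))
     \<and> (\<forall>c x y. br x (scale c y) = scale c (br x y))
     \<and> (\<forall>x. br x x = 0)
     \<and> (\<forall>x y z. br x (br y z) + br y (br z x) + br z (br x y) = 0)"

definition lie_subalg :: "('k::field \<Rightarrow> 'v::ab_group_add \<Rightarrow> 'v) \<Rightarrow> ('v \<Rightarrow> 'v \<Rightarrow> 'v) \<Rightarrow> 'v set \<Rightarrow> bool" where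
  "lie_subalg scale br S \<longleftrightarrow> module.subspace scale S \<and> (\<forall>x\<in>S. \<forall>y\<in>S. br x y \<in> S)"

definition lie_gen :: "('k::field \<Rightarrow> 'v::ab_group_add \<Rightarrow> 'v) \<Rightarrow> ('v \<Rightarrow> 'v \<Rightarrow> 'v) \<Rightarrow> 'v set \<Rightarrow> 'v set" where
  "lie_gen scale br X = \<Inter>{T. lie_subalg scale br T \<and> X \<subseteq> T}"

definition lie_ideal :: "('k::field \<Rightarrow> 'v::ab_group_add \<Rightarrow> 'v) \<Rightarrow> ('v \<Rightarrow> 'v \<Rightarrow> 'v) \<Rightarrow> 'v set \<Rightarrow> 'v set \<Rightarrow> bool" where
  "lie_ideal scale br S I \<longleftrightarrow> module.subspace scale I \<and> I \<subseteq> S \<and> (\<forall>x\<in>I. \<forall>y\<in>S. br x y \<in> I)"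

primrec lcs :: "('k::field \<Rightarrow> 'v::ab_group_add \<Rightarrow> 'v) \<Rightarrow> ('v \<Rightarrow> 'v \<Rightarrow> 'v) \<Rightarrow> 'v set \<Rightarrow> nat \<Rightarrow> 'v set" where
  "lcs scale br I 0 = I"
| "lcs scale br I (Suc n) = module.span scale {br x y | x y. x \<in> lcs scale br I n \<and> y \<in> I}"

definition lie_nilpotent :: "('k::field \<Rightarrow> 'v::ab_group_add \<Rightarrow> 'v) \<Rightarrow> ('v \<Rightarrow> 'v \<Rightarrow> 'v) \<Rightarrow> 'v set \<Rightarrow> bool" where
  "lie_nilpotent scale br I \<longleftrightarrow> (\<exists>n. lcs scale br I n = {0})"

definition ideal_gen :: "('k::field \<Rightarrow> 'v::ab_group_add \<Rightarrow> 'v) \<Rightarrow> ('v \<Rightarrow> 'v \<Rightarrow> 'v) \<Rightarrow> 'v set \<Rightarrow> 'v set \<Rightarrow> 'v set" where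
  "ideal_gen scale br S X = \<Inter>{J. lie_ideal scale br S J \<and> X \<subseteq> J}"

definition fit :: "('k::field \<Rightarrow> 'v::ab_group_add \<Rightarrow> 'v) \<Rightarrow> ('v \<Rightarrow> 'v \<Rightarrow> 'v) \<Rightarrow> 'v set \<Rightarrow> 'v set" where
  "fit scale br S = ideal_gen scale br S (\<Union>{I. lie_ideal scale br S I \<and> lie_nilpotent scale br I})"

definition lie_abelian :: "('v::ab_group_add \<Rightarrow> 'v \<Rightarrow> 'v) \<Rightarrow> 'v set \<Rightarrow> bool" where
  "lie_abelian br I \<longleftrightarrow> (\<forall>x\<in>I. \<forall>y\<in>I. br x y = 0)"

definition metabelian :: "('v::ab_group_add \<Rightarrow> 'v \<Rightarrow> 'v) \<Rightarrow> 'v set \<Rightarrow> bool" where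
  "metabelian br S \<longleftrightarrow> (\<forall>a\<in>S. \<forall>b\<in>S. \<forall>c\<in>S. \<forall>d\<in>S. br (br a b) (br c d) = 0)"

text \<open>B \<subseteq> S is a set of representatives whose images form a basis of S/F.\<close>
definition basis_mod :: "('k::field \<Rightarrow> 'v::ab_group_add \<Rightarrow> 'v) \<Rightarrow> 'v set \<Rightarrow> 'v set \<Rightarrow> 'v set \<Rightarrow> bool" where
  "basis_mod scale S F B \<longleftrightarrow> B \<subseteq> S
     \<and> (\<forall>B' c. finite B' \<and> B' \<subseteq> B \<and> (\<Sum>b\<in>B'. scale (c b) b) \<in> F \<longrightarrow> (\<forall>b\<in>B'. c b = 0))
     \<and> S \<subseteq> module.span scale (B \<union> F)"

text \<open>Action of a monomial (multiset of variables x_a, a \<in> B) on b: b \<circ> a1 \<circ> ... \<circ> an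
(left-normed; the order is irrelevant on an abelian Fit(A)).\<close>
definition mon_act :: "('v \<Rightarrow> 'v \<Rightarrow> 'v) \<Rightarrow> 'v \<Rightarrow> 'v multiset \<Rightarrow> 'v" where
  "mon_act br b M = foldl (\<lambda>x a. br x a) b (SOME xs. mset xs = M)"

text \<open>Polynomials in R = k[x_a : a \<in> B]: finitely supported maps from monomials to k.\<close>
definition poly_act :: "('k::field \<Rightarrow> 'v::ab_group_add \<Rightarrow> 'v) \<Rightarrow> ('v \<Rightarrow> 'v \<Rightarrow> 'v) \<Rightarrow> 'v \<Rightarrow> ('v multiset \<Rightarrow>\<^sub>0 'k) \<Rightarrow> 'v" where
  "poly_act scale br b f = (\<Sum>M\<in>Poly_Mapping.keys f. scale (Poly_Mapping.lookup f M) (mon_act br b M))"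

definition torsion_free :: "('k::field \<Rightarrow> 'v::ab_group_add \<Rightarrow> 'v) \<Rightarrow> ('v \<Rightarrow> 'v \<Rightarrow> 'v) \<Rightarrow> 'v set \<Rightarrow> 'v set \<Rightarrow> bool" where
  "torsion_free scale br F B \<longleftrightarrow>
     (\<forall>b\<in>F. \<forall>f :: 'v multiset \<Rightarrow>\<^sub>0 'k. f \<noteq> 0 \<and> (\<forall>M\<in>Poly_Mapping.keys f. set_mset M \<subseteq> B)
        \<and> poly_act scale br b f = 0 \<longrightarrow> b = 0)"

definition U_algebra :: "('k::field \<Rightarrow> 'v::ab_group_add \<Rightarrow> 'v) \<Rightarrow> ('v \<Rightarrow> 'v \<Rightarrow> 'v) \<Rightarrow> 'v set \<Rightarrow> bool" where
  "U_algebra scale br S \<longleftrightarrow> lie_abelian br (fit scale br S)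
     \<and> (\<exists>B. basis_mod scale S (fit scale br S) B \<and> torsion_free scale br (fit scale br S) B)"

end

theory Submission
  imports Defs
begin

(* For b in an abelian Fit(A) and a basis B of A modulo Fit(A), torsion-freeness says that the
   monomials b \<circ> a1 \<circ> ... \<circ> an over B are linearly independent.  This property is finitary, and
   it transfers between finite sets independent modulo Fit(A): by Steinitz exchange modulo Fit(A)
   one may pass from C to any C' with card C' \<le> card C and C \<subseteq> span (C' \<union> Fit(A)), and then the
   monomials of degree \<le> n over C span those over C' while being at least as many.

   A subalgebra H of a U-algebra either meets Fit(A) trivially, and is then abelian, or satisfies
   Fit(H) = Fit(A) \<inter> H: an element u outside Fit(A) of a nilpotent ideal of H would give
   b \<circ> u \<circ> ... \<circ> u = 0.  A basis of H modulo Fit(H) is then independent modulo Fit(A) and inherits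
   torsion-freeness.

   Conversely, if every finitely generated subalgebra is a U-algebra, then two elements of Fit(A)
   lie in the Fitting radical of a finitely generated subalgebra, so Fit(A) is abelian.  Since
   Fit(A) is its own centraliser, a finite set B0 independent modulo Fit(A) has a finite set M \<subseteq> Fit(A)
   whose common annihilator in span B0 is zero; in the subalgebra generated by B0, b and M the set B0
   stays independent modulo the Fitting radical, which yields torsion-freeness at b over B0. *)

locale lie_alg = vector_space scale
  for scale :: "'k::field \<Rightarrow> 'v::ab_group_add \<Rightarrow> 'v" (infixr \<open>*s\<close> 75) +
  fixes br :: "'v \<Rightarrow> 'v \<Rightarrow> 'v"
  assumes bracket_add_left: "br (x + y) z = br x z + br y z"
    and bracket_add_right: "br x (y + z) = br x y + br x z"
    and bracket_scale_left: "br (c *s x) y = c *s br x y"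
    and bracket_scale_right: "br x (c *s y) = c *s br x y"
    and bracket_self: "br x x = 0"
    and jacobi: "br x (br y z) + br y (br z x) + br z (br x y) = 0"

lemma lie_alg_if_lie_algebra: "lie_algebra scale br \<Longrightarrow> lie_alg scale br"
  unfolding lie_algebra_def lie_alg_def lie_alg_axioms_def by blast

context lie_alg
begin

lemma bracket_zero_left [simp]: "br 0 y = 0"
  using bracket_add_left[of 0 0 y] by simp

lemma bracket_zero_right [simp]: "br x 0 = 0"
  using bracket_add_right[of x 0 0] by simp

lemma bracket_antisym: "br x y = - br y x"
proof -
  have "br x x + br y x + (br x y + br y y) = 0"
    using bracket_self[of "x + y"] by (simp only: bracket_add_left bracket_add_right)
  then have "br y x + br x y = 0" by (simp only: bracket_self add_0_left add_0_right)
  then show ?thesis by (metis add_eq_0_iff)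
qed

lemma bracket_neg_left: "br (- x) y = - br x y"
  using bracket_add_left[of x "- x" y] by (simp add: add_eq_0_iff)

lemma subspace_bracket_left_vimage: "subspace T \<Longrightarrow> subspace {x. br x y \<in> T}"
  unfolding subspace_def by (auto simp: bracket_add_left bracket_scale_left)

lemma subspace_bracket_right_vimage: "subspace T \<Longrightarrow> subspace {y. br x y \<in> T}"
  unfolding subspace_def by (auto simp: bracket_add_right bracket_scale_right)

lemma bracket_span_left:
  assumes "subspace T" "x \<in> span X" "\<And>e. e \<in> X \<Longrightarrow> br e y \<in> T"
  shows "br x y \<in> T"
  using span_minimal[OF _ subspace_bracket_left_vimage[OF assms(1)], of X y] assms(2,3) by blast

lemma bracket_span_right:
  assumes "subspace T" "y \<in> span Y" "\<And>e. e \<in> Y \<Longrightarrow> br x e \<in> T"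
  shows "br x y \<in> T"
  using span_minimal[OF _ subspace_bracket_right_vimage[OF assms(1)], of Y x] assms(2,3) by blast

lemma lie_abelian_span:
  assumes "\<And>e e'. e \<in> X \<Longrightarrow> e' \<in> X \<Longrightarrow> br e e' = 0"
  shows "lie_abelian br (span X)"
  unfolding lie_abelian_def
proof (intro ballI)
  fix x y assume x: "x \<in> span X" and y: "y \<in> span X"
  have "br e y \<in> {0}" if "e \<in> X" for e
    using bracket_span_right[OF subspace_single_0 y] assms that by blast
  then have "br x y \<in> {0}"
    by (rule bracket_span_left[OF subspace_single_0 x])
  then show "br x y = 0" by simp
qed

end

context lie_alg
begin

lemma lie_subalg_subspace: "lie_subalg scale br S \<Longrightarrow> subspace S"
  unfolding lie_subalg_def by blast

lemma lie_subalg_UNIV: "lie_subalg scale br UNIV"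
  unfolding lie_subalg_def by simp

lemma lie_subalg_lie_gen: "lie_subalg scale br (lie_gen scale br X)"
proof -
  let ?A = "{T. lie_subalg scale br T \<and> X \<subseteq> T}"
  have "subspace (\<Inter>?A)"
    by (rule subspace_Inter) (auto simp: lie_subalg_def)
  moreover have "br x y \<in> \<Inter>?A" if "x \<in> \<Inter>?A" "y \<in> \<Inter>?A" for x y
    using that unfolding lie_subalg_def by blast
  ultimately show ?thesis
    unfolding lie_gen_def lie_subalg_def by blast
qed

lemma lie_gen_superset: "X \<subseteq> lie_gen scale br X"
  unfolding lie_gen_def by blast

lemma lie_ideal_self: "lie_subalg scale br S \<Longrightarrow> lie_ideal scale br S S"
  unfolding lie_subalg_def lie_ideal_def by blast

lemma lie_ideal_subspace: "lie_ideal scale br S I \<Longrightarrow> subspace I"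
  unfolding lie_ideal_def by blast

lemma lie_ideal_ideal_gen:
  assumes "lie_subalg scale br S" "X \<subseteq> S"
  shows "lie_ideal scale br S (ideal_gen scale br S X)"
proof -
  let ?A = "{J. lie_ideal scale br S J \<and> X \<subseteq> J}"
  have "S \<in> ?A"
    using assms lie_ideal_self by blast
  moreover have "subspace (\<Inter>?A)"
    by (rule subspace_Inter) (auto simp: lie_ideal_def)
  moreover have "br x y \<in> \<Inter>?A" if "x \<in> \<Inter>?A" "y \<in> S" for x y
    using that unfolding lie_ideal_def by blast
  ultimately show ?thesis
    unfolding ideal_gen_def lie_ideal_def by blast
qed

lemma ideal_gen_least: "lie_ideal scale br S J \<Longrightarrow> X \<subseteq> J \<Longrightarrow> ideal_gen scale br S X \<subseteq> J"
  unfolding ideal_gen_def by blast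

lemma ideal_gen_superset: "X \<subseteq> ideal_gen scale br S X"
  unfolding ideal_gen_def by blast

lemma lie_ideal_Int_subalg:
  assumes "lie_ideal scale br S I" "lie_subalg scale br H" "H \<subseteq> S"
  shows "lie_ideal scale br H (I \<inter> H)"
  using assms unfolding lie_ideal_def lie_subalg_def by (auto intro: subspace_inter)

lemma zero_in_lcs: "subspace I \<Longrightarrow> 0 \<in> lcs scale br I n"
  by (cases n) (auto simp: subspace_0 span_zero)

lemma lcs_mono: "J \<subseteq> I \<Longrightarrow> lcs scale br J n \<subseteq> lcs scale br I n"
proof (induction n)
  case (Suc n)
  then have "{br x y | x y. x \<in> lcs scale br J n \<and> y \<in> J}
      \<subseteq> {br x y | x y. x \<in> lcs scale br I n \<and> y \<in> I}" by blast
  then show ?case by (simp add: span_mono)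
qed simp

lemma lie_nilpotent_subset:
  "subspace J \<Longrightarrow> J \<subseteq> I \<Longrightarrow> lie_nilpotent scale br I \<Longrightarrow> lie_nilpotent scale br J"
  unfolding lie_nilpotent_def using lcs_mono zero_in_lcs by blast

lemma lie_nilpotent_if_abelian:
  assumes "subspace I" "lie_abelian br I"
  shows "lie_nilpotent scale br I"
proof -
  have "{br x y | x y. x \<in> lcs scale br I 0 \<and> y \<in> I} \<subseteq> {0}"
    using assms(2) by (auto simp: lie_abelian_def)
  then have "lcs scale br I (Suc 0) \<subseteq> {0}"
    using span_minimal[OF _ subspace_single_0] by simp
  then have "lcs scale br I (Suc 0) = {0}"
    using zero_in_lcs[OF assms(1), of "Suc 0"] by blast
  then show ?thesis unfolding lie_nilpotent_def by blast
qed

lemma nilpotent_ideal_subset_fit: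
  "lie_ideal scale br S I \<Longrightarrow> lie_nilpotent scale br I \<Longrightarrow> I \<subseteq> fit scale br S"
  unfolding fit_def
  using ideal_gen_superset[of "\<Union>{I. lie_ideal scale br S I \<and> lie_nilpotent scale br I}" S] by blast

lemma lie_ideal_fit: "lie_subalg scale br S \<Longrightarrow> lie_ideal scale br S (fit scale br S)"
  unfolding fit_def by (rule lie_ideal_ideal_gen) (auto simp only: lie_ideal_def)

lemma fit_subset_span_nilpotent:
  assumes S: "lie_subalg scale br S"
  shows "fit scale br S \<subseteq> span (\<Union>{I. lie_ideal scale br S I \<and> lie_nilpotent scale br I})"
    (is "_ \<subseteq> span ?U")
proof -
  have "lie_ideal scale br S (span ?U)"
  proof -
    have "span ?U \<subseteq> S"
      using S by (intro span_minimal) (auto simp: lie_ideal_def lie_subalg_def)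
    moreover have "br x y \<in> span ?U" if "x \<in> span ?U" "y \<in> S" for x y
      using that by (intro bracket_span_left[of _ x ?U]) (auto simp: lie_ideal_def intro!: span_base)
    ultimately show ?thesis
      unfolding lie_ideal_def by simp
  qed
  then show ?thesis
    unfolding fit_def by (rule ideal_gen_least) (rule span_superset)
qed

lemma nilpotent_ideal_Int_subset_fit:
  assumes "lie_ideal scale br S I" "lie_nilpotent scale br I" "lie_subalg scale br H" "H \<subseteq> S"
  shows "I \<inter> H \<subseteq> fit scale br H"
proof -
  have "lie_ideal scale br H (I \<inter> H)"
    using lie_ideal_Int_subalg assms by blast
  moreover then have "lie_nilpotent scale br (I \<inter> H)"
    using lie_nilpotent_subset assms(2) lie_ideal_subspace by blast
  ultimately show ?thesis by (rule nilpotent_ideal_subset_fit)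
qed

lemma fit_eq_self_if_abelian:
  assumes "lie_subalg scale br H" "lie_abelian br H"
  shows "fit scale br H = H"
proof
  show "H \<subseteq> fit scale br H"
    using assms by (intro nilpotent_ideal_subset_fit lie_ideal_self lie_nilpotent_if_abelian
        lie_subalg_subspace)
  show "fit scale br H \<subseteq> H"
    using lie_ideal_fit[OF assms(1)] unfolding lie_ideal_def by blast
qed

end

section \<open>Linear independence modulo a subspace\<close>

definition indep_mod :: "('k::field \<Rightarrow> 'v::ab_group_add \<Rightarrow> 'v) \<Rightarrow> 'v set \<Rightarrow> 'v set \<Rightarrow> bool" where
  "indep_mod scale F B \<longleftrightarrow>
     (\<forall>B' c. finite B' \<and> B' \<subseteq> B \<and> (\<Sum>b\<in>B'. scale (c b) b) \<in> F \<longrightarrow> (\<forall>b\<in>B'. c b = 0))"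

lemma basis_mod_iff:
  "basis_mod scale S F B \<longleftrightarrow> B \<subseteq> S \<and> indep_mod scale F B \<and> S \<subseteq> module.span scale (B \<union> F)"
  unfolding basis_mod_def indep_mod_def by blast

lemma indep_modD:
  "indep_mod scale F B \<Longrightarrow> finite B' \<Longrightarrow> B' \<subseteq> B \<Longrightarrow> (\<Sum>b\<in>B'. scale (c b) b) \<in> F \<Longrightarrow> b \<in> B'
    \<Longrightarrow> c b = 0"
  unfolding indep_mod_def by blast

lemma indep_mod_subset: "indep_mod scale F B \<Longrightarrow> B' \<subseteq> B \<Longrightarrow> indep_mod scale F B'"
  unfolding indep_mod_def by blast

context vector_space
begin

lemma indep_mod_if_Int:
  assumes "subspace H" "B \<subseteq> H" "indep_mod scale (F \<inter> H) B"
  shows "indep_mod scale F B"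
  unfolding indep_mod_def
proof (intro allI impI ballI, elim conjE)
  fix B' c b assume "finite B'" "B' \<subseteq> B" "(\<Sum>b\<in>B'. c b *s b) \<in> F" "b \<in> B'"
  moreover have "(\<Sum>b\<in>B'. c b *s b) \<in> H"
    using \<open>B' \<subseteq> B\<close> assms(1,2) by (intro subspace_sum subspace_scale) auto
  ultimately show "c b = 0"
    using indep_modD[OF assms(3)] by blast
qed

lemma indep_mod_singleton:
  assumes "subspace F" "u \<notin> F"
  shows "indep_mod scale F {u}"
  unfolding indep_mod_def
proof (intro allI impI ballI, elim conjE)
  fix B' c x assume "B' \<subseteq> {u}" "(\<Sum>b\<in>B'. c b *s b) \<in> F" "x \<in> B'"
  moreover from this have "B' = {u}" "x = u" by auto
  ultimately have "x = u" "c u *s u \<in> F" by simp_all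
  show "c x = 0"
  proof (rule ccontr)
    assume "c x \<noteq> 0"
    then have "u = inverse (c u) *s (c u *s u)"
      using \<open>x = u\<close> by simp
    then show False
      using subspace_scale[OF assms(1) \<open>c u *s u \<in> F\<close>] assms(2) by metis
  qed
qed

lemma eq_zero_if_indep_mod:
  assumes "finite B" "indep_mod scale F B" "u \<in> span B" "u \<in> F"
  shows "u = 0"
proof -
  obtain c where c: "u = (\<Sum>v\<in>B. c v *s v)"
    using assms(3) unfolding span_finite[OF assms(1)] by blast
  then have "\<forall>v\<in>B. c v = 0"
    using indep_modD[OF assms(2,1) order_refl, of c] assms(4) by blast
  then show ?thesis using c by simp
qed

lemma independent_Un_if_indep_mod:
  assumes F: "subspace F" and A: "indep_mod scale F A" and D: "independent D" "D \<subseteq> F"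
  shows "independent (A \<union> D)" "A \<inter> D = {}"
proof -
  show "A \<inter> D = {}"
  proof (rule ccontr)
    assume "A \<inter> D \<noteq> {}"
    then obtain a where "a \<in> A" "a \<in> D" by blast
    then show False
      using indep_modD[OF A, of "{a}" "\<lambda>_. 1" a] D(2) by auto
  qed
  show "independent (A \<union> D)"
    unfolding independent_explicit_finite_subsets
  proof (intro allI impI ballI)
    fix T u v assume T: "T \<subseteq> A \<union> D" "finite T" and s: "(\<Sum>v\<in>T. u v *s v) = 0" and v: "v \<in> T"
    have split: "(\<Sum>v\<in>T. u v *s v) = (\<Sum>v\<in>T \<inter> A. u v *s v) + (\<Sum>v\<in>T - A. u v *s v)"
      using T(2) by (rule sum.Int_Diff)
    have "(\<Sum>v\<in>T - A. u v *s v) \<in> F"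
      using T(1) D(2) by (intro subspace_sum[OF F] subspace_scale[OF F]) auto
    moreover have "(\<Sum>v\<in>T \<inter> A. u v *s v) = - (\<Sum>v\<in>T - A. u v *s v)"
      using s split by (simp add: eq_neg_iff_add_eq_0)
    ultimately have "(\<Sum>v\<in>T \<inter> A. u v *s v) \<in> F"
      using subspace_neg[OF F] by simp
    then have A0: "\<forall>w\<in>T \<inter> A. u w = 0"
      using indep_modD[OF A, of "T \<inter> A" u] T(2) by blast
    then have "(\<Sum>v\<in>T - A. u v *s v) = 0"
      using s split by simp
    then have "\<forall>w\<in>T - A. u w = 0"
      using independentD[OF D(1)] T by blast
    then show "u v = 0"
      using A0 v by blast
  qed
qed

lemma exists_basis_mod:
  assumes "subspace S" "subspace F" "F \<subseteq> S"
  shows "\<exists>B. basis_mod scale S F B"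
proof -
  obtain D where D: "D \<subseteq> F" "independent D" "F \<subseteq> span D"
    using maximal_independent_subset by blast
  obtain E where E: "D \<subseteq> E" "E \<subseteq> S" "independent E" "S \<subseteq> span E"
    using maximal_independent_subset_extend[of D S] D assms(3) by blast
  have "E \<subseteq> (E - D) \<union> F"
    using D(1) by blast
  then have "S \<subseteq> span ((E - D) \<union> F)"
    using E(4) span_mono by blast
  moreover have "indep_mod scale F (E - D)"
    unfolding indep_mod_def
  proof (intro allI impI ballI, elim conjE)
    fix B' c x assume B': "finite B'" "B' \<subseteq> E - D" and "(\<Sum>b\<in>B'. c b *s b) \<in> F" and x: "x \<in> B'"
    then have "(\<Sum>b\<in>B'. c b *s b) \<in> span D"
      using D(3) by blast
    then obtain t r where t: "finite t" "t \<subseteq> D" "(\<Sum>b\<in>B'. c b *s b) = (\<Sum>a\<in>t. r a *s a)"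
      unfolding span_explicit by blast
    have disj: "B' \<inter> t = {}" using B'(2) t(2) by blast
    define w where "w a = (if a \<in> B' then c a else - r a)" for a
    have "(\<Sum>a\<in>B' \<union> t. w a *s a) = (\<Sum>a\<in>B'. w a *s a) + (\<Sum>a\<in>t. w a *s a)"
      using disj by (rule sum.union_disjoint[OF B'(1) t(1)])
    also have "(\<Sum>a\<in>B'. w a *s a) = (\<Sum>a\<in>B'. c a *s a)"
      by (simp add: w_def)
    also have "(\<Sum>a\<in>t. w a *s a) = (\<Sum>a\<in>t. (- r a) *s a)"
      using disj by (intro sum.cong) (auto simp: w_def)
    also have "\<dots> = - (\<Sum>a\<in>t. r a *s a)"
      by (simp add: sum_negf)
    finally have z: "(\<Sum>a\<in>B' \<union> t. w a *s a) = 0"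
      using t(3) by simp
    have "w x = 0"
      by (rule independentD[OF E(3) _ _ z]) (use B' t E(1) x in auto)
    then show "c x = 0" using x by (simp add: w_def)
  qed
  ultimately show ?thesis
    unfolding basis_mod_iff using E(2) by blast
qed

lemma finite_subset_span_Un:
  assumes "finite X" "X \<subseteq> span (B \<union> F)"
  shows "\<exists>B0. finite B0 \<and> B0 \<subseteq> B \<and> X \<subseteq> span (B0 \<union> F)"
  using assms
proof (induction X rule: finite_induct)
  case (insert x X)
  obtain B1 where B1: "finite B1" "B1 \<subseteq> B" "X \<subseteq> span (B1 \<union> F)"
    using insert by auto
  obtain t r where t: "finite t" "t \<subseteq> B \<union> F" "x = (\<Sum>a\<in>t. r a *s a)"
    using insert.prems unfolding span_explicit by blast
  have "x \<in> span t"
    using t(3) by (simp add: span_sum span_scale span_base)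
  then have "x \<in> span ((t \<inter> B) \<union> F)"
    using t(2) span_mono[of t "(t \<inter> B) \<union> F"] by blast
  moreover have "span (B1 \<union> F) \<subseteq> span (B1 \<union> (t \<inter> B) \<union> F)"
      "span ((t \<inter> B) \<union> F) \<subseteq> span (B1 \<union> (t \<inter> B) \<union> F)"
    by (intro span_mono; blast)+
  ultimately show ?case
    using B1 t(1) by (intro exI[of _ "B1 \<union> (t \<inter> B)"]) auto
qed (intro exI[of _ "{}"]; simp)

lemma finite_subset_if_in_span:
  assumes "x \<in> span X"
  obtains t where "finite t" "t \<subseteq> X" "x \<in> span t"
proof -
  obtain t r where "finite t" "t \<subseteq> X" "x = (\<Sum>a\<in>t. r a *s a)"
    using assms unfolding span_explicit by blast
  then show ?thesis
    using that by (simp add: span_sum span_scale span_base)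
qed

lemma indep_mod_if_span_Int_subset:
  assumes "indep_mod scale F B" "\<And>u. u \<in> span B \<Longrightarrow> u \<in> G \<Longrightarrow> u \<in> F"
  shows "indep_mod scale G B"
  unfolding indep_mod_def
proof (intro allI impI ballI, elim conjE)
  fix B' c x assume B': "finite B'" "B' \<subseteq> B" "(\<Sum>b\<in>B'. c b *s b) \<in> G" "x \<in> B'"
  moreover have "(\<Sum>b\<in>B'. c b *s b) \<in> span B"
    using B'(2) by (intro span_sum span_scale) (auto intro: span_base)
  ultimately show "c x = 0"
    using assms indep_modD by metis
qed

lemma exchange_indep_mod:
  assumes F: "subspace F" and B0: "finite B0" and B1: "finite B1" "indep_mod scale F B1"
    and B1_span: "B1 \<subseteq> span (B0 \<union> F)"
  obtains C where "B1 \<subseteq> C" "finite C" "card C \<le> card B0" "C \<subseteq> span (B0 \<union> F)" "B0 \<subseteq> span (C \<union> F)"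
proof -
  obtain D where D: "D \<subseteq> F \<inter> span (B0 \<union> B1)" "independent D" "F \<inter> span (B0 \<union> B1) \<subseteq> span D"
    using maximal_independent_subset by blast
  have "finite D"
    using independent_span_bound[OF _ D(2)] B0 B1(1) D(1) by blast
  have B1_D: "independent (B1 \<union> D)" "B1 \<inter> D = {}"
    using independent_Un_if_indep_mod[OF F B1(2) D(2)] D(1) by auto
  have span_F: "span F = F"
    using F by simp
  have "B1 \<subseteq> span (B0 \<union> D)"
  proof
    fix x assume x: "x \<in> B1"
    then obtain y z where yz: "x = y + z" "y \<in> span B0" "z \<in> F"
      using B1_span unfolding span_Un span_F by blast
    have "x \<in> span (B0 \<union> B1)"
      using x by (simp add: span_base)
    moreover have "y \<in> span (B0 \<union> B1)"
      using yz(2) span_mono[of B0 "B0 \<union> B1"] by blast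
    ultimately have "z \<in> span (B0 \<union> B1)"
      using yz(1) span_diff by fastforce
    then have "z \<in> span (B0 \<union> D)"
      using yz(3) D(3) span_mono[of D "B0 \<union> D"] by blast
    moreover have "y \<in> span (B0 \<union> D)"
      using yz(2) span_mono[of B0 "B0 \<union> D"] by blast
    ultimately show "x \<in> span (B0 \<union> D)"
      using yz(1) span_add by blast
  qed
  then have "B1 \<union> D \<subseteq> span (B0 \<union> D)"
    using span_superset[of "B0 \<union> D"] by blast
  then obtain E where E: "B1 \<union> D \<subseteq> E" "E \<subseteq> span (B0 \<union> D)" "independent E" "span (B0 \<union> D) \<subseteq> span E"
    using maximal_independent_subset_extend[OF _ B1_D(1)] by blast
  have "finite E" "card E \<le> card (B0 \<union> D)"
    using independent_span_bound[OF _ E(3) E(2)] B0 \<open>finite D\<close> by auto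
  moreover have "card (E - D) = card E - card D"
    using card_Diff_subset[OF \<open>finite D\<close>] E(1) by blast
  ultimately have "card (E - D) \<le> card B0"
    using card_Un_le[of B0 D] by linarith
  moreover have "E - D \<subseteq> span (B0 \<union> F)"
    using E(2) D(1) span_mono[of "B0 \<union> D" "B0 \<union> F"] by blast
  moreover have "B0 \<subseteq> span ((E - D) \<union> F)"
    using E(4) D(1) span_superset[of "B0 \<union> D"] span_mono[of E "(E - D) \<union> F"] by blast
  ultimately show ?thesis
    using that[of "E - D"] E(1) B1_D(2) \<open>finite E\<close> by blast
qed

lemma independent_image_coeffs_zero:
  assumes "inj_on g K" "independent (g ` K)" "K0 \<subseteq> K" "finite K0"
    and "(\<Sum>M\<in>K0. c M *s g M) = 0" "M \<in> K0"
  shows "c M = 0"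
proof -
  have inj: "inj_on g K0"
    using assms(1,3) inj_on_subset by blast
  have "(\<Sum>v\<in>g ` K0. c (inv_into K0 g v) *s v) = (\<Sum>M\<in>K0. c M *s g M)"
    using inj by (simp add: sum.reindex inv_into_f_f)
  then have "c (inv_into K0 g (g M)) = 0"
    using assms(2-6) by (intro independentD[OF assms(2)]) auto
  then show ?thesis
    using inj assms(6) by (simp add: inv_into_f_f)
qed

lemma inj_independent_if_card_le:
  assumes "finite K" "independent A" "A \<subseteq> span (f ` K)" "card K \<le> card A"
  shows "inj_on f K" "independent (f ` K)"
proof -
  obtain A' where A': "A' \<subseteq> f ` K" "independent A'" "f ` K \<subseteq> span A'"
    using maximal_independent_subset by blast
  have "finite A'"
    using A'(1) assms(1) finite_subset by blast
  moreover have "A \<subseteq> span A'"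
    using assms(3) span_minimal[OF A'(3) subspace_span] by blast
  ultimately have "card A \<le> card A'"
    using independent_span_bound[OF _ assms(2)] by blast
  moreover have "card A' \<le> card (f ` K)"
    using A'(1) assms(1) by (simp add: card_mono)
  moreover have "card (f ` K) \<le> card K"
    using assms(1) by (rule card_image_le)
  ultimately have card: "card A' = card (f ` K)" "card (f ` K) = card K"
    using assms(4) by linarith+
  show "inj_on f K"
    using eq_card_imp_inj_on[OF assms(1) card(2)] .
  have "A' = f ` K"
    using card_subset_eq[OF _ A'(1) card(1)] assms(1) by blast
  then show "independent (f ` K)"
    using A'(2) by simp
qed

lemma dim_less_if_subspace_psubset:
  assumes "subspace Z1" "subspace Z2" "Z1 \<subseteq> Z2" "Z2 \<subseteq> span B" "finite B" "u \<in> Z2" "u \<notin> Z1"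
  shows "dim Z1 < dim Z2"
proof -
  obtain A1 where A1: "A1 \<subseteq> Z1" "independent A1" "Z1 \<subseteq> span A1" "card A1 = dim Z1"
    using basis_exists by blast
  obtain A2 where A2: "A2 \<subseteq> Z2" "independent A2" "Z2 \<subseteq> span A2" "card A2 = dim Z2"
    using basis_exists by blast
  have "finite A1" "finite A2"
    using independent_span_bound[OF assms(5)] A1(1,2) A2(1,2) assms(3,4) by blast+
  have "u \<notin> span A1"
    using span_minimal[OF A1(1) assms(1)] assms(7) by blast
  then have "independent (insert u A1)" "u \<notin> A1"
    using independent_insertI[OF _ A1(2)] span_superset by blast+
  moreover have "insert u A1 \<subseteq> span A2"
    using assms(3,6) A1(1) A2(3) by blast
  ultimately have "Suc (card A1) \<le> card A2"
    using independent_span_bound[OF \<open>finite A2\<close>] \<open>finite A1\<close> by fastforce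
  then show ?thesis
    using A1(4) A2(4) by simp
qed

end

section \<open>Monomial independence\<close>

definition mon_indep :: "('k::field \<Rightarrow> 'v::ab_group_add \<Rightarrow> 'v) \<Rightarrow> ('v \<Rightarrow> 'v \<Rightarrow> 'v) \<Rightarrow> 'v \<Rightarrow> 'v set \<Rightarrow> bool" where
  "mon_indep scale br b C \<longleftrightarrow> (\<forall>K c. finite K \<and> (\<forall>M\<in>K. set_mset M \<subseteq> C) \<and>
      (\<Sum>M\<in>K. scale (c M) (mon_act br b M)) = 0 \<longrightarrow> (\<forall>M\<in>K. c M = 0))"

lemma mon_indepD:
  "mon_indep scale br b C \<Longrightarrow> finite K \<Longrightarrow> (\<And>M. M \<in> K \<Longrightarrow> set_mset M \<subseteq> C) \<Longrightarrow>
    (\<Sum>M\<in>K. scale (c M) (mon_act br b M)) = 0 \<Longrightarrow> M \<in> K \<Longrightarrow> c M = 0"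
  unfolding mon_indep_def by blast

lemma mon_indep_subset: "mon_indep scale br b C \<Longrightarrow> C' \<subseteq> C \<Longrightarrow> mon_indep scale br b C'"
  unfolding mon_indep_def by blast

lemma mon_indep_iff_finite_subsets:
  "mon_indep scale br b C \<longleftrightarrow> (\<forall>C0. finite C0 \<and> C0 \<subseteq> C \<longrightarrow> mon_indep scale br b C0)"
proof (intro iffI allI impI)
  assume fin: "\<forall>C0. finite C0 \<and> C0 \<subseteq> C \<longrightarrow> mon_indep scale br b C0"
  show "mon_indep scale br b C"
    unfolding mon_indep_def
  proof (intro allI impI, elim conjE)
    fix K c assume K: "finite K" "\<forall>M\<in>K. set_mset M \<subseteq> C"
      and "(\<Sum>M\<in>K. scale (c M) (mon_act br b M)) = 0"
    moreover have "mon_indep scale br b (\<Union>(set_mset ` K))"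
      using fin K by auto
    ultimately show "\<forall>M\<in>K. c M = 0"
      using mon_indepD[of scale br b "\<Union>(set_mset ` K)" K] by blast
  qed
qed (auto intro: mon_indep_subset)

lemma mon_act_empty [simp]: "mon_act br b {#} = b"
  unfolding mon_act_def by simp

definition bounded_msets :: "'a set \<Rightarrow> nat \<Rightarrow> 'a multiset set" where
  "bounded_msets C n = {M. set_mset M \<subseteq> C \<and> size M \<le> n}"

lemma finite_bounded_msets: "finite C \<Longrightarrow> finite (bounded_msets C n)"
proof -
  assume "finite C"
  have "bounded_msets C n \<subseteq> mset ` {xs. set xs \<subseteq> C \<and> length xs \<le> n}"
  proof
    fix M assume "M \<in> bounded_msets C n"
    moreover obtain xs where "mset xs = M" using ex_mset by blast
    ultimately show "M \<in> mset ` {xs. set xs \<subseteq> C \<and> length xs \<le> n}"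
      by (intro image_eqI[of _ _ xs]) (auto simp: bounded_msets_def)
  qed
  then show ?thesis
    using finite_lists_length_le[OF \<open>finite C\<close>] finite_subset by blast
qed

lemma card_bounded_msets_mono:
  assumes "finite C" "finite C'" "card C' \<le> card C"
  shows "card (bounded_msets C' n) \<le> card (bounded_msets C n)"
proof -
  obtain g where g: "g ` C' \<subseteq> C" "inj_on g C'"
    using card_le_inj[OF assms(2,1,3)] by blast
  have "image_mset (inv_into C' g) (image_mset g M) = M" if "set_mset M \<subseteq> C'" for M
    using that g(2) by (simp add: multiset.map_comp inv_into_f_f subset_iff cong: image_mset_cong)
  then have "inj_on (image_mset g) (bounded_msets C' n)"
    by (intro inj_on_inverseI[where g = "image_mset (inv_into C' g)"]) (auto simp: bounded_msets_def)
  moreover have "image_mset g ` bounded_msets C' n \<subseteq> bounded_msets C n"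
    using g(1) by (fastforce simp: bounded_msets_def)
  ultimately show ?thesis
    using card_inj_on_le finite_bounded_msets[OF assms(1)] by blast
qed

context vector_space
begin

lemma torsion_free_iff_mon_indep:
  "torsion_free scale br F B \<longleftrightarrow> (\<forall>b\<in>F. b \<noteq> 0 \<longrightarrow> mon_indep scale br b B)"
proof (intro iffI ballI impI)
  fix b assume tf: "torsion_free scale br F B" and b: "b \<in> F" "b \<noteq> 0"
  show "mon_indep scale br b B"
    unfolding mon_indep_def
  proof (intro allI impI, elim conjE)
    fix K c assume K: "finite K" "\<forall>M\<in>K. set_mset M \<subseteq> B"
      and s: "(\<Sum>M\<in>K. c M *s mon_act br b M) = 0"
    define f where "f = Abs_poly_mapping (\<lambda>M. if M \<in> K then c M else 0)"
    have "finite {M. (if M \<in> K then c M else 0) \<noteq> 0}"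
      using K(1) by (rule rev_finite_subset) (simp add: subset_iff)
    then have lookup_f: "Poly_Mapping.lookup f = (\<lambda>M. if M \<in> K then c M else 0)"
      unfolding f_def by simp
    have keys: "Poly_Mapping.keys f = {M \<in> K. c M \<noteq> 0}"
      by (auto simp: in_keys_iff lookup_f split: if_splits)
    have "poly_act scale br b f = (\<Sum>M\<in>K. c M *s mon_act br b M)"
      unfolding poly_act_def keys using K(1)
      by (intro sum.mono_neutral_cong_left) (auto simp: lookup_f)
    moreover have "\<forall>M\<in>Poly_Mapping.keys f. set_mset M \<subseteq> B"
      using K(2) keys by auto
    ultimately have "f = 0"
      using tf b s unfolding torsion_free_def by auto
    then show "\<forall>M\<in>K. c M = 0"
      using keys by auto
  qed
next
  assume md: "\<forall>b\<in>F. b \<noteq> 0 \<longrightarrow> mon_indep scale br b B"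
  show "torsion_free scale br F B"
    unfolding torsion_free_def
  proof (intro ballI allI impI, elim conjE)
    fix b f
    assume b: "b \<in> F" and "f \<noteq> 0" and keys: "\<forall>M\<in>Poly_Mapping.keys f. set_mset M \<subseteq> B"
      and pa: "poly_act scale br b f = 0"
    show "b = 0"
    proof (rule ccontr)
      assume "b \<noteq> 0"
      have "Poly_Mapping.lookup f M = 0" if "M \<in> Poly_Mapping.keys f" for M
        by (rule mon_indepD[OF md[rule_format, OF b \<open>b \<noteq> 0\<close>]])
          (use keys pa that in \<open>auto simp: poly_act_def\<close>)
      then have "Poly_Mapping.keys f = {}"
        using in_keys_iff by blast
      then show False
        using \<open>f \<noteq> 0\<close> by simp
    qed
  qed
qed

lemma mon_indep_empty: "b \<noteq> 0 \<Longrightarrow> mon_indep scale br b {}"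
  unfolding mon_indep_def
proof (intro allI impI ballI, elim conjE)
  fix K c M assume "b \<noteq> 0" "\<forall>M\<in>K. set_mset M \<subseteq> {}" "(\<Sum>M\<in>K. c M *s mon_act br b M) = 0" "M \<in> K"
  then have "K = {{#}}"
    by auto
  then show "c M = 0"
    using \<open>b \<noteq> 0\<close> \<open>M \<in> K\<close> \<open>(\<Sum>M\<in>K. c M *s mon_act br b M) = 0\<close> by simp
qed

lemma inj_on_mon_act_if_mon_indep:
  assumes "mon_indep scale br b C" "\<And>M. M \<in> K \<Longrightarrow> set_mset M \<subseteq> C"
  shows "inj_on (mon_act br b) K"
proof
  fix M1 M2 assume M: "M1 \<in> K" "M2 \<in> K" and eq: "mon_act br b M1 = mon_act br b M2"
  show "M1 = M2"
  proof (rule ccontr)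
    assume "M1 \<noteq> M2"
    define c where "c M = (if M = M1 then 1 else - 1 :: 'a)" for M
    have "(\<Sum>M\<in>{M1, M2}. c M *s mon_act br b M) = 0"
      using eq \<open>M1 \<noteq> M2\<close> by (simp add: c_def)
    then have "c M1 = 0"
      using mon_indepD[OF assms(1), of "{M1, M2}" c M1] assms(2) M by blast
    then show False by (simp add: c_def)
  qed
qed

lemma independent_mon_act_if_mon_indep:
  assumes "mon_indep scale br b C" "finite K" "\<And>M. M \<in> K \<Longrightarrow> set_mset M \<subseteq> C"
  shows "independent (mon_act br b ` K)"
proof (rule independent_if_scalars_zero)
  fix u x assume s: "(\<Sum>x\<in>mon_act br b ` K. u x *s x) = 0" and "x \<in> mon_act br b ` K"
  then obtain M where M: "M \<in> K" "x = mon_act br b M" by blast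
  have "inj_on (mon_act br b) K"
    using inj_on_mon_act_if_mon_indep assms(1,3) by blast
  then have "(\<Sum>M\<in>K. u (mon_act br b M) *s mon_act br b M) = 0"
    using s by (simp add: sum.reindex)
  from mon_indepD[OF assms(1,2) assms(3) this M(1)] show "u x = 0"
    using M(2) by simp
qed (use assms(2) in simp)

lemma mon_indep_if_bounded_msets:
  assumes "\<And>n. inj_on (mon_act br b) (bounded_msets C n) \<and>
    independent (mon_act br b ` bounded_msets C n)"
  shows "mon_indep scale br b C"
  unfolding mon_indep_def
proof (intro allI impI ballI, elim conjE)
  fix K c M assume K: "finite K" "\<forall>M\<in>K. set_mset M \<subseteq> C"
    and s: "(\<Sum>M\<in>K. c M *s mon_act br b M) = 0" and M: "M \<in> K"
  have "K \<subseteq> bounded_msets C (\<Sum>M\<in>K. size M)"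
    using K member_le_sum[of _ K size] by (auto simp: bounded_msets_def)
  then show "c M = 0"
    using assms[of "\<Sum>M\<in>K. size M"] independent_image_coeffs_zero[OF _ _ _ K(1) s M] by blast
qed

end

section \<open>Monomials acting on an abelian ideal\<close>

locale abelian_derived_ideal = lie_alg scale br
  for scale :: "'k::field \<Rightarrow> 'v::ab_group_add \<Rightarrow> 'v" (infixr \<open>*s\<close> 75) and br +
  fixes S F :: "'v set"
  assumes subspace_S: "subspace S" and subspace_F: "subspace F" and F_subset_S: "F \<subseteq> S"
    and bracket_F_S: "x \<in> F \<Longrightarrow> y \<in> S \<Longrightarrow> br x y \<in> F"
    and bracket_F_F: "x \<in> F \<Longrightarrow> y \<in> F \<Longrightarrow> br x y = 0"
    and bracket_S_S: "x \<in> S \<Longrightarrow> y \<in> S \<Longrightarrow> br x y \<in> F"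
begin

lemma bracket_bracket_commute:
  assumes "x \<in> F" "a1 \<in> S" "a2 \<in> S"
  shows "br (br x a1) a2 = br (br x a2) a1"
proof -
  have "br x (br a1 a2) = 0"
    using assms bracket_S_S bracket_F_F by blast
  then have "br a1 (br a2 x) + br a2 (br x a1) = 0"
    using jacobi[of x a1 a2] by simp
  moreover have "br a1 (br a2 x) = br (br x a2) a1" "br a2 (br x a1) = - br (br x a1) a2"
    by (metis bracket_antisym bracket_neg_left) (rule bracket_antisym)
  ultimately show ?thesis
    by (simp add: add_eq_0_iff)
qed

lemma foldl_bracket_in_F: "x \<in> F \<Longrightarrow> set xs \<subseteq> S \<Longrightarrow> foldl br x xs \<in> F"
  by (induction xs arbitrary: x) (auto intro: bracket_F_S)

lemma foldl_bracket_swap: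
  "x \<in> F \<Longrightarrow> set ys \<subseteq> S \<Longrightarrow> a \<in> S \<Longrightarrow> br (foldl br x ys) a = foldl br (br x a) ys"
proof (induction ys arbitrary: x)
  case (Cons c ys)
  then have "br (foldl br (br x c) ys) a = foldl br (br (br x c) a) ys"
    using bracket_F_S by auto
  then show ?case
    using Cons.prems bracket_bracket_commute by simp
qed simp

lemma foldl_bracket_perm:
  "mset xs = mset ys \<Longrightarrow> x \<in> F \<Longrightarrow> set xs \<subseteq> S \<Longrightarrow> foldl br x xs = foldl br x ys"
proof (induction xs arbitrary: x ys)
  case (Cons a xs)
  then obtain ys1 ys2 where ys: "ys = ys1 @ a # ys2"
    by (metis list.set_intros(1) set_mset_mset split_list)
  have "set ys \<subseteq> S"
    using Cons.prems by (metis set_mset_mset)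
  then have "foldl br x ys = foldl br (foldl br (br x a) ys1) ys2"
    using foldl_bracket_swap[of x ys1 a] Cons.prems ys by auto
  also have "\<dots> = foldl br (br x a) (ys1 @ ys2)"
    by simp
  also have "\<dots> = foldl br (br x a) xs"
    using Cons.prems ys bracket_F_S by (intro Cons.IH[symmetric]) auto
  finally show ?case by simp
qed simp

lemma mon_act_eq_foldl:
  "mset xs = M \<Longrightarrow> b \<in> F \<Longrightarrow> set_mset M \<subseteq> S \<Longrightarrow> mon_act br b M = foldl br b xs"
  unfolding mon_act_def by (metis (mono_tags, lifting) ex_mset foldl_bracket_perm set_mset_mset someI_ex)

lemma mon_act_in_F: "b \<in> F \<Longrightarrow> set_mset M \<subseteq> S \<Longrightarrow> mon_act br b M \<in> F"
  by (metis ex_mset foldl_bracket_in_F mon_act_eq_foldl set_mset_mset)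

lemma mon_act_add_mset:
  assumes "b \<in> F" "a \<in> S" "set_mset M \<subseteq> S"
  shows "mon_act br b (add_mset a M) = br (mon_act br b M) a"
proof -
  obtain xs where xs: "mset xs = M" using ex_mset by blast
  then have "mon_act br b (add_mset a M) = foldl br b (xs @ [a])"
    using mon_act_eq_foldl[of "xs @ [a]"] assms by auto
  then show ?thesis
    using mon_act_eq_foldl[OF xs] assms by simp
qed

lemma mon_act_in_span_bounded_msets:
  assumes b: "b \<in> F" and C: "C \<subseteq> S" "C' \<subseteq> S" "C \<subseteq> span (C' \<union> F)"
  shows "set_mset M \<subseteq> C \<Longrightarrow> mon_act br b M \<in> span (mon_act br b ` bounded_msets C' (size M))"
proof (induction M)
  case empty
  show ?case
    by (rule span_base) (force simp: bounded_msets_def)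
next
  case (add a M)
  let ?G = "\<lambda>n. mon_act br b ` bounded_msets C' n"
  have a: "a \<in> S" "a \<in> span (C' \<union> F)" and M: "set_mset M \<subseteq> S"
    using add.prems C by auto
  have step: "br g a \<in> span (?G (Suc (size M)))" if g: "g \<in> ?G (size M)" for g
  proof -
    obtain N where N: "g = mon_act br b N" "set_mset N \<subseteq> C'" "size N \<le> size M"
      using g unfolding bounded_msets_def by blast
    show ?thesis
    proof (rule bracket_span_right[OF subspace_span a(2)])
      fix x assume "x \<in> C' \<union> F"
      then show "br g x \<in> span (?G (Suc (size M)))"
      proof
        assume "x \<in> C'"
        moreover have "set_mset N \<subseteq> S"
          using N(2) C(2) by blast
        ultimately have "br g x = mon_act br b (add_mset x N)"
          using N(1) C(2) mon_act_add_mset[OF b] by auto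
        moreover have "add_mset x N \<in> bounded_msets C' (Suc (size M))"
          using N \<open>x \<in> C'\<close> by (auto simp: bounded_msets_def)
        ultimately show ?thesis by (simp add: span_base)
      next
        assume "x \<in> F"
        moreover have "g \<in> F"
          using N(1,2) C(2) b mon_act_in_F by blast
        ultimately have "br g x = 0"
          using bracket_F_F by blast
        then show ?thesis
          by (simp add: span_zero)
      qed
    qed
  qed
  have "br (mon_act br b M) a \<in> span (?G (Suc (size M)))"
    using add.IH add.prems by (intro bracket_span_left[OF subspace_span _ step]) auto
  then show ?case
    using mon_act_add_mset[OF b a(1) M] by simp
qed

text \<open>The monomials of degree \<open>\<le> n\<close> over \<open>C\<close> are independent, lie in the span of those over
  \<open>C'\<close> and are at least as many; hence the latter are independent too.\<close>

lemma mon_indep_exchange: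
  assumes b: "b \<in> F" and C: "finite C" "C \<subseteq> S" and C': "finite C'" "C' \<subseteq> S"
    and card: "card C' \<le> card C" and span: "C \<subseteq> span (C' \<union> F)" and indep: "mon_indep scale br b C"
  shows "mon_indep scale br b C'"
proof (rule mon_indep_if_bounded_msets)
  fix n
  let ?f = "mon_act br b"
  have "?f ` bounded_msets C n \<subseteq> span (?f ` bounded_msets C' n)"
  proof clarify
    fix M assume M: "M \<in> bounded_msets C n"
    have "?f M \<in> span (?f ` bounded_msets C' (size M))"
      using mon_act_in_span_bounded_msets[OF b C(2) C'(2) span] M by (simp add: bounded_msets_def)
    moreover have "bounded_msets C' (size M) \<subseteq> bounded_msets C' n"
      using M by (auto simp: bounded_msets_def)
    ultimately show "?f M \<in> span (?f ` bounded_msets C' n)"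
      using span_mono[OF image_mono] by blast
  qed
  moreover have "independent (?f ` bounded_msets C n)"
    using indep finite_bounded_msets[OF C(1)]
    by (intro independent_mon_act_if_mon_indep) (auto simp: bounded_msets_def)
  moreover have "inj_on ?f (bounded_msets C n)"
    using indep by (rule inj_on_mon_act_if_mon_indep) (simp add: bounded_msets_def)
  then have "card (bounded_msets C' n) \<le> card (?f ` bounded_msets C n)"
    using card_bounded_msets_mono[OF C(1) C'(1) card] by (simp add: card_image)
  ultimately show "inj_on ?f (bounded_msets C' n) \<and> independent (?f ` bounded_msets C' n)"
    using inj_independent_if_card_le[OF finite_bounded_msets[OF C'(1)]] by blast
qed

lemma mon_indep_transfer:
  assumes b: "b \<in> F" and B0: "finite B0" "B0 \<subseteq> S" "mon_indep scale br b B0"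
    and B1: "finite B1" "indep_mod scale F B1" "B1 \<subseteq> span (B0 \<union> F)"
  shows "mon_indep scale br b B1"
proof -
  obtain C where C: "B1 \<subseteq> C" "finite C" "card C \<le> card B0" "C \<subseteq> span (B0 \<union> F)" "B0 \<subseteq> span (C \<union> F)"
    using exchange_indep_mod[OF subspace_F B0(1) B1] by blast
  have "span (B0 \<union> F) \<subseteq> S"
    using B0(2) F_subset_S by (intro span_minimal subspace_S) auto
  then have "mon_indep scale br b C"
    using mon_indep_exchange[OF b B0(1,2) C(2) _ C(3,5) B0(3)] C(4) by blast
  then show ?thesis
    using mon_indep_subset C(1) by blast
qed

lemma mon_indep_if_indep_mod:
  assumes b: "b \<in> F" and B: "B \<subseteq> S" "mon_indep scale br b B"
    and B1: "indep_mod scale F B1" "B1 \<subseteq> span (B \<union> F)"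
  shows "mon_indep scale br b B1"
  unfolding mon_indep_iff_finite_subsets[of _ _ _ B1]
proof (intro allI impI, elim conjE)
  fix C assume C: "finite C" "C \<subseteq> B1"
  then obtain B0 where B0: "finite B0" "B0 \<subseteq> B" "C \<subseteq> span (B0 \<union> F)"
    using finite_subset_span_Un[of C B F] B1(2) by blast
  show "mon_indep scale br b C"
    using mon_indep_transfer[OF b B0(1) _ _ C(1) indep_mod_subset[OF B1(1) C(2)] B0(3)]
      B0(2) B mon_indep_subset by blast
qed

lemma mon_act_replicate_in_lcs:
  assumes I: "lie_ideal scale br H I" "u \<in> I" "u \<in> S" and b: "b \<in> F" "b \<in> H"
  shows "mon_act br b (replicate_mset (Suc n) u) \<in> lcs scale br I n"
proof -
  have rep: "set_mset (replicate_mset m u) \<subseteq> S" for m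
    using I(3) by simp
  show ?thesis
  proof (induction n)
    case 0
    have "br u b \<in> I"
      using I(1,2) b(2) unfolding lie_ideal_def by blast
    then have "br b u \<in> I"
      using subspace_neg[OF lie_ideal_subspace[OF I(1)]] bracket_antisym[of b u] by simp
    then show ?case
      using mon_act_add_mset[OF b(1) I(3) rep[of 0]] by simp
  next
    case (Suc n)
    have "mon_act br b (replicate_mset (Suc (Suc n)) u) = br (mon_act br b (replicate_mset (Suc n) u)) u"
      using mon_act_add_mset[OF b(1) I(3) rep[of "Suc n"]] by simp
    moreover have "br (mon_act br b (replicate_mset (Suc n) u)) u \<in> lcs scale br I (Suc n)"
      unfolding lcs.simps by (rule span_base) (use Suc.IH I(2) in blast)
    ultimately show ?case
      by simp
  qed
qed

lemma not_mon_indep_if_nilpotent: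
  assumes I: "lie_ideal scale br H I" "lie_nilpotent scale br I" "u \<in> I" "u \<in> S"
    and b: "b \<in> F" "b \<in> H"
  shows "\<not> mon_indep scale br b {u}"
proof
  assume indep: "mon_indep scale br b {u}"
  obtain n where "lcs scale br I n = {0}"
    using I(2) unfolding lie_nilpotent_def by blast
  then have "mon_act br b (replicate_mset (Suc n) u) = 0"
    using mon_act_replicate_in_lcs[OF I(1,3,4) b] by blast
  then have "(\<Sum>M\<in>{replicate_mset (Suc n) u}. (1 :: 'k) *s mon_act br b M) = 0"
    by simp
  moreover have "set_mset (replicate_mset (Suc n) u) \<subseteq> {u}"
    by simp
  ultimately have "(1 :: 'k) = 0"
    using mon_indepD[OF indep, of "{replicate_mset (Suc n) u}" "\<lambda>_. 1"] by blast
  then show False by simp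
qed

end

context lie_alg
begin

lemma U_algebra_if_abelian:
  assumes "lie_subalg scale br H" "lie_abelian br H"
  shows "U_algebra scale br H"
proof -
  have "basis_mod scale H H {}"
    unfolding basis_mod_iff indep_mod_def using span_superset[of H] by auto
  moreover have "torsion_free scale br H {}"
    unfolding torsion_free_iff_mon_indep using mon_indep_empty by blast
  ultimately show ?thesis
    unfolding U_algebra_def fit_eq_self_if_abelian[OF assms] using assms(2) by blast
qed

end

locale metabelian_lie_alg = lie_alg +
  assumes metabelian: "br (br a b) (br c d) = 0"

lemma metabelian_lie_alg_if:
  "lie_algebra scale br \<Longrightarrow> metabelian br UNIV \<Longrightarrow> metabelian_lie_alg scale br"
  unfolding metabelian_lie_alg_def metabelian_lie_alg_axioms_def metabelian_def
  using lie_alg_if_lie_algebra by blast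

context metabelian_lie_alg
begin

lemma bracket_in_fit:
  assumes S: "lie_subalg scale br S" and "x \<in> S" "y \<in> S"
  shows "br x y \<in> fit scale br S"
proof -
  let ?D = "{br a b | a b. a \<in> S \<and> b \<in> S}" let ?J = "span ?D"
  have "?D \<subseteq> S"
    using S unfolding lie_subalg_def by blast
  then have "?J \<subseteq> S"
    using S by (intro span_minimal lie_subalg_subspace)
  moreover have "br u v \<in> ?J" if "u \<in> ?J" "v \<in> S" for u v
  proof (rule bracket_span_left[OF subspace_span that(1)])
    fix e assume "e \<in> ?D"
    then show "br e v \<in> ?J"
      using \<open>?D \<subseteq> S\<close> that(2) by (intro span_base) blast
  qed
  ultimately have "lie_ideal scale br S ?J"
    unfolding lie_ideal_def by simp
  moreover have "lie_abelian br ?J"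
    by (rule lie_abelian_span) (auto simp: metabelian)
  ultimately have "?J \<subseteq> fit scale br S"
    by (intro nilpotent_ideal_subset_fit lie_nilpotent_if_abelian) simp_all
  moreover have "br x y \<in> ?J"
    using assms(2,3) by (intro span_base) blast
  ultimately show ?thesis by blast
qed

lemma abelian_derived_ideal_fit:
  assumes S: "lie_subalg scale br S" and "lie_abelian br (fit scale br S)"
  shows "abelian_derived_ideal scale br S (fit scale br S)"
  using lie_ideal_fit[OF S] assms lie_subalg_subspace bracket_in_fit
  unfolding abelian_derived_ideal_def abelian_derived_ideal_axioms_def lie_ideal_def lie_abelian_def
  by (simp add: lie_alg_axioms)

lemma centralizer_fit_subset:
  assumes ab: "lie_abelian br (fit scale br UNIV)" and u: "\<forall>m\<in>fit scale br UNIV. br m u = 0"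
  shows "u \<in> fit scale br UNIV"
proof -
  let ?F = "fit scale br UNIV" let ?J = "span (insert u ?F)"
  have F: "lie_ideal scale br UNIV ?F"
    by (rule lie_ideal_fit[OF lie_subalg_UNIV])
  have "br x y \<in> ?J" if "x \<in> ?J" for x y
  proof (rule bracket_span_left[OF subspace_span that])
    fix e assume "e \<in> insert u ?F"
    then have "br e y \<in> ?F"
      using F bracket_in_fit[OF lie_subalg_UNIV] unfolding lie_ideal_def by blast
    then show "br e y \<in> ?J" by (simp add: span_base)
  qed
  then have "lie_ideal scale br UNIV ?J"
    unfolding lie_ideal_def by simp
  moreover have "br e e' = 0" if "e \<in> insert u ?F" "e' \<in> insert u ?F" for e e'
    using that u ab bracket_self bracket_antisym[of u] unfolding lie_abelian_def by fastforce
  then have "lie_abelian br ?J"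
    by (rule lie_abelian_span)
  ultimately have "?J \<subseteq> ?F"
    by (intro nilpotent_ideal_subset_fit lie_nilpotent_if_abelian) simp_all
  then show ?thesis
    using span_base[of u "insert u ?F"] by blast
qed

text \<open>Take \<open>M\<close> minimising the dimension of the common annihilator in \<open>span B\<close>: a nonzero survivor
  \<open>u\<close> is outside \<open>Fit(A)\<close>, so some \<open>m \<in> Fit(A)\<close> moves it and \<open>insert m M\<close> would do better.\<close>

lemma exists_finite_annihilator:
  assumes ab: "lie_abelian br (fit scale br UNIV)"
    and B: "finite B" "indep_mod scale (fit scale br UNIV) B"
  obtains M where "finite M" "M \<subseteq> fit scale br UNIV"
    "\<And>u. u \<in> span B \<Longrightarrow> \<forall>m\<in>M. br m u = 0 \<Longrightarrow> u = 0"
proof -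
  let ?F = "fit scale br UNIV"
  define Z where "Z M = {u \<in> span B. \<forall>m\<in>M. br m u = 0}" for M
  have Z: "subspace (Z M)" for M
    unfolding subspace_def Z_def by (auto simp: span_zero span_add span_scale bracket_add_right bracket_scale_right)
  obtain M where M: "finite M" "M \<subseteq> ?F"
    and least: "\<And>M'. finite M' \<and> M' \<subseteq> ?F \<Longrightarrow> dim (Z M) \<le> dim (Z M')"
    using ex_has_least_nat[of "\<lambda>M. finite M \<and> M \<subseteq> ?F" "{}" "\<lambda>M. dim (Z M)"] by auto
  have "u = 0" if u: "u \<in> span B" "\<forall>m\<in>M. br m u = 0" for u
  proof (rule ccontr)
    assume "u \<noteq> 0"
    then have "u \<notin> ?F"
      using eq_zero_if_indep_mod[OF B u(1)] by blast
    then obtain m where m: "m \<in> ?F" "br m u \<noteq> 0"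
      using centralizer_fit_subset[OF ab] by blast
    have "Z (insert m M) \<subseteq> Z M" "Z M \<subseteq> span B" "u \<in> Z M" "u \<notin> Z (insert m M)"
      using u m unfolding Z_def by auto
    then have "dim (Z (insert m M)) < dim (Z M)"
      by (rule dim_less_if_subspace_psubset[OF Z Z _ _ B(1)])
    moreover have "dim (Z M) \<le> dim (Z (insert m M))"
      using least M m by blast
    ultimately show False by simp
  qed
  then show ?thesis
    using that M by blast
qed

subsection \<open>Subalgebras of a U-algebra\<close>

lemma fit_Int_subalg_subset:
  assumes "lie_abelian br (fit scale br UNIV)" "lie_subalg scale br H"
  shows "fit scale br UNIV \<inter> H \<subseteq> fit scale br H"
proof -
  have F: "lie_ideal scale br UNIV (fit scale br UNIV)"
    by (rule lie_ideal_fit[OF lie_subalg_UNIV])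
  then have "lie_nilpotent scale br (fit scale br UNIV)"
    using lie_nilpotent_if_abelian[OF lie_ideal_subspace assms(1)] by blast
  then show ?thesis
    by (rule nilpotent_ideal_Int_subset_fit[OF F _ assms(2) subset_UNIV])
qed

lemma fit_subalg_eq_Int:
  assumes ab: "lie_abelian br (fit scale br UNIV)"
    and B: "basis_mod scale UNIV (fit scale br UNIV) B" "torsion_free scale br (fit scale br UNIV) B"
    and H: "lie_subalg scale br H" and b0: "b0 \<in> fit scale br UNIV \<inter> H" "b0 \<noteq> 0"
  shows "fit scale br H = fit scale br UNIV \<inter> H"
proof
  let ?F = "fit scale br UNIV"
  interpret A: abelian_derived_ideal scale br UNIV ?F
    by (rule abelian_derived_ideal_fit[OF lie_subalg_UNIV ab])
  show "?F \<inter> H \<subseteq> fit scale br H"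
    by (rule fit_Int_subalg_subset[OF ab H])
  have "u \<in> ?F" if I: "lie_ideal scale br H I" "lie_nilpotent scale br I" "u \<in> I" for u I
  proof (rule ccontr)
    assume "u \<notin> ?F"
    then have indep_u: "indep_mod scale ?F {u}"
      by (rule indep_mod_singleton[OF A.subspace_F])
    have indep_B: "mon_indep scale br b0 B"
      using B(2) b0 unfolding torsion_free_iff_mon_indep by blast
    have "{u} \<subseteq> span (B \<union> ?F)"
      using B(1) unfolding basis_mod_iff by blast
    then have "mon_indep scale br b0 {u}"
      using A.mon_indep_if_indep_mod[OF _ subset_UNIV indep_B indep_u] b0(1) by blast
    moreover have "\<not> mon_indep scale br b0 {u}"
      using b0(1) by (intro A.not_mon_indep_if_nilpotent[OF I UNIV_I]) auto
    ultimately show False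
      by contradiction
  qed
  moreover have "\<Union>{I. lie_ideal scale br H I \<and> lie_nilpotent scale br I} \<subseteq> H"
    unfolding lie_ideal_def by blast
  ultimately have "\<Union>{I. lie_ideal scale br H I \<and> lie_nilpotent scale br I} \<subseteq> ?F \<inter> H"
    by blast
  then show "fit scale br H \<subseteq> ?F \<inter> H"
    unfolding fit_def[of scale br H]
    by (rule ideal_gen_least[OF lie_ideal_Int_subalg[OF lie_ideal_fit[OF lie_subalg_UNIV] H subset_UNIV]])
qed

lemma U_algebra_subalg:
  assumes U: "U_algebra scale br UNIV" and H: "lie_subalg scale br H"
  shows "U_algebra scale br H"
proof -
  let ?F = "fit scale br UNIV"
  obtain B where ab: "lie_abelian br ?F"
    and B: "basis_mod scale UNIV ?F B" "torsion_free scale br ?F B"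
    using U unfolding U_algebra_def by blast
  interpret A: abelian_derived_ideal scale br UNIV ?F
    by (rule abelian_derived_ideal_fit[OF lie_subalg_UNIV ab])
  show ?thesis
  proof (cases "?F \<inter> H \<subseteq> {0}")
    case True
    have "br x y \<in> ?F \<inter> H" if "x \<in> H" "y \<in> H" for x y
      using A.bracket_S_S lie_subalg_def[of scale br H] H that by simp
    then have "lie_abelian br H"
      using True unfolding lie_abelian_def by blast
    then show ?thesis
      by (rule U_algebra_if_abelian[OF H])
  next
    case False
    then obtain b0 where b0: "b0 \<in> ?F \<inter> H" "b0 \<noteq> 0" by blast
    have fit_H: "fit scale br H = ?F \<inter> H"
      by (rule fit_subalg_eq_Int[OF ab B H b0])
    obtain BH where BH: "basis_mod scale H (fit scale br H) BH"
      using exists_basis_mod[OF lie_subalg_subspace[OF H] lie_ideal_subspace[OF lie_ideal_fit[OF H]]]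
        lie_ideal_fit[OF H] unfolding lie_ideal_def by blast
    have "mon_indep scale br b BH" if "b \<in> fit scale br H" "b \<noteq> 0" for b
    proof (rule A.mon_indep_if_indep_mod)
      show "b \<in> ?F" "mon_indep scale br b B"
        using that B(2) fit_H unfolding torsion_free_iff_mon_indep by auto
      have "BH \<subseteq> H" "indep_mod scale (?F \<inter> H) BH"
        using BH fit_H unfolding basis_mod_iff by auto
      then show "indep_mod scale ?F BH"
        by (rule indep_mod_if_Int[OF lie_subalg_subspace[OF H]])
      show "BH \<subseteq> span (B \<union> ?F)"
        using B(1) unfolding basis_mod_iff by blast
    qed simp
    moreover have "lie_abelian br (fit scale br H)"
      using ab fit_H unfolding lie_abelian_def by blast
    ultimately show ?thesis
      unfolding U_algebra_def torsion_free_iff_mon_indep using BH by blast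
  qed
qed

subsection \<open>Finitely generated subalgebras\<close>

lemma fit_abelian_if_finitely_generated:
  assumes fg: "\<And>X. finite X \<Longrightarrow> U_algebra scale br (lie_gen scale br X)"
  shows "lie_abelian br (fit scale br UNIV)"
  unfolding lie_abelian_def
proof (intro ballI)
  let ?U = "\<Union>{I. lie_ideal scale br UNIV I \<and> lie_nilpotent scale br I}"
  fix x y assume "x \<in> fit scale br UNIV" "y \<in> fit scale br UNIV"
  then have "x \<in> span ?U" "y \<in> span ?U"
    using fit_subset_span_nilpotent[OF lie_subalg_UNIV] by blast+
  then obtain t t' where t: "finite t" "t \<subseteq> ?U" "x \<in> span t" and t': "finite t'" "t' \<subseteq> ?U" "y \<in> span t'"
    by (meson finite_subset_if_in_span)
  define H where "H = lie_gen scale br (t \<union> t')"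
  have H: "lie_subalg scale br H" "t \<union> t' \<subseteq> H"
    unfolding H_def by (rule lie_subalg_lie_gen, rule lie_gen_superset)
  have "t \<union> t' \<subseteq> fit scale br H"
    using nilpotent_ideal_Int_subset_fit[OF _ _ H(1) subset_UNIV] t(2) t'(2) H(2) by blast
  then have "span (t \<union> t') \<subseteq> fit scale br H"
    using span_minimal lie_ideal_subspace[OF lie_ideal_fit[OF H(1)]] by blast
  moreover have "x \<in> span (t \<union> t')" "y \<in> span (t \<union> t')"
    using t(3) t'(3) span_mono[of t "t \<union> t'"] span_mono[of t' "t \<union> t'"] by blast+
  moreover have "lie_abelian br (fit scale br H)"
    using fg[of "t \<union> t'"] t(1) t'(1) unfolding H_def U_algebra_def by blast
  ultimately show "br x y = 0"
    unfolding lie_abelian_def by blast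
qed

lemma mon_indep_if_finitely_generated:
  assumes fg: "\<And>X. finite X \<Longrightarrow> U_algebra scale br (lie_gen scale br X)"
    and ab: "lie_abelian br (fit scale br UNIV)"
    and B0: "finite B0" "indep_mod scale (fit scale br UNIV) B0"
    and b: "b \<in> fit scale br UNIV" "b \<noteq> 0"
  shows "mon_indep scale br b B0"
proof -
  obtain M where M: "finite M" "M \<subseteq> fit scale br UNIV"
    and annihilates: "\<And>u. u \<in> span B0 \<Longrightarrow> \<forall>m\<in>M. br m u = 0 \<Longrightarrow> u = 0"
    using exists_finite_annihilator[OF ab B0] by blast
  define H where "H = lie_gen scale br (B0 \<union> {b} \<union> M)"
  have H: "lie_subalg scale br H" "B0 \<union> {b} \<union> M \<subseteq> H"
    unfolding H_def by (rule lie_subalg_lie_gen, rule lie_gen_superset)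
  obtain BH where abH: "lie_abelian br (fit scale br H)"
    and BH: "basis_mod scale H (fit scale br H) BH" "torsion_free scale br (fit scale br H) BH"
    using fg[of "B0 \<union> {b} \<union> M"] B0(1) M(1) unfolding H_def U_algebra_def by blast
  interpret HH: abelian_derived_ideal scale br H "fit scale br H"
    by (rule abelian_derived_ideal_fit[OF H(1) abH])
  have "fit scale br UNIV \<inter> H \<subseteq> fit scale br H"
    by (rule fit_Int_subalg_subset[OF ab H(1)])
  then have b_H: "b \<in> fit scale br H" and M_H: "M \<subseteq> fit scale br H"
    using b(1) M(2) H(2) by blast+
  have "u \<in> fit scale br UNIV" if "u \<in> span B0" "u \<in> fit scale br H" for u
  proof -
    have "\<forall>m\<in>M. br m u = 0"
      using M_H that(2) abH unfolding lie_abelian_def by blast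
    then show ?thesis
      using annihilates[OF that(1)] subspace_0[OF HH.subspace_F] HH.F_subset_S
        lie_ideal_subspace[OF lie_ideal_fit[OF lie_subalg_UNIV]] subspace_0 by auto
  qed
  then have "indep_mod scale (fit scale br H) B0"
    by (rule indep_mod_if_span_Int_subset[OF B0(2)])
  moreover have "B0 \<subseteq> span (BH \<union> fit scale br H)"
    using H(2) BH(1) unfolding basis_mod_iff by blast
  moreover have "BH \<subseteq> H" "mon_indep scale br b BH"
    using BH b_H b(2) unfolding basis_mod_iff torsion_free_iff_mon_indep by blast+
  ultimately show ?thesis
    using HH.mon_indep_if_indep_mod[OF b_H] by blast
qed

lemma U_algebra_if_finitely_generated:
  assumes fg: "\<And>X. finite X \<Longrightarrow> U_algebra scale br (lie_gen scale br X)"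
  shows "U_algebra scale br UNIV"
proof -
  let ?F = "fit scale br UNIV"
  have ab: "lie_abelian br ?F"
    by (rule fit_abelian_if_finitely_generated[OF fg])
  interpret A: abelian_derived_ideal scale br UNIV ?F
    by (rule abelian_derived_ideal_fit[OF lie_subalg_UNIV ab])
  obtain B where B: "basis_mod scale UNIV ?F B"
    using exists_basis_mod[OF subspace_UNIV A.subspace_F subset_UNIV] by blast
  have "mon_indep scale br b B" if "b \<in> ?F" "b \<noteq> 0" for b
    unfolding mon_indep_iff_finite_subsets[of _ _ _ B]
    using mon_indep_if_finitely_generated[OF fg ab _ _ that] indep_mod_subset B
    unfolding basis_mod_iff by blast
  then show ?thesis
    unfolding U_algebra_def torsion_free_iff_mon_indep using ab B by blast
qed

end

theorem theorem3p2p3: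
  fixes scale :: "'k::field \<Rightarrow> 'v::ab_group_add \<Rightarrow> 'v"
    and br :: "'v \<Rightarrow> 'v \<Rightarrow> 'v"
  assumes "lie_algebra scale br"
    and "metabelian br UNIV"
  shows "U_algebra scale br UNIV \<longleftrightarrow>
           (\<forall>X. finite X \<longrightarrow> U_algebra scale br (lie_gen scale br X))"
proof -
  interpret metabelian_lie_alg scale br
    by (rule metabelian_lie_alg_if[OF assms])
  show ?thesis
    using U_algebra_subalg[OF _ lie_subalg_lie_gen] U_algebra_if_finitely_generated by blast
qed

end
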